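(* Let $G$ be an interval graph. If $G$ contains the forbidden pattern $\mathtt{F}$ as an induced subgraph (an induced path $P$ on $k$ vertices whose open neighbourhood contains an independent set of at least $k+3$ vertices), then $G$ is not an exactly hittable interval graph.
   Context: An interval graph is the intersection graph of a finite family of intervals on a line. An interval family (interval hypergraph) is exactly hittable if there is a set $S$ of points with $|S\cap I|=1$ for every interval $I$ of the family. An exactly hittable interval graph is an interval graph having an interval representation that is exactly hittable. The open neighbourhood of a path $P$ is the set of vertices not on $P$ adjacent to some vertex of $P$. *)

theory Defs
  imports Complex_Main
begin

definition simple_graph :: "'a set \<Rightarrow> ('a \<Rightarrow> 'a \<Rightarrow> bool) \<Rightarrow> bool" where
  "simple_graph V E \<longleftrightarrow> finite V \<and> (\<forall>u v. E u v \<longrightarrow> u \<in> V \<and> v \<in> V)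
     \<and> (\<forall>u v. E u v \<longrightarrow> E v u) \<and> (\<forall>v. \<not> E v v)"

definition interval_rep :: "'a set \<Rightarrow> ('a \<Rightarrow> 'a \<Rightarrow> bool) \<Rightarrow> ('a \<Rightarrow> real set) \<Rightarrow> bool" where
  "interval_rep V E I \<longleftrightarrow> (\<forall>v\<in>V. \<exists>a b. a \<le> b \<and> I v = {a..b})
     \<and> (\<forall>u\<in>V. \<forall>v\<in>V. u \<noteq> v \<longrightarrow> (E u v \<longleftrightarrow> I u \<inter> I v \<noteq> {}))"

definition interval_graph :: "'a set \<Rightarrow> ('a \<Rightarrow> 'a \<Rightarrow> bool) \<Rightarrow> bool" where
  "interval_graph V E \<longleftrightarrow> (\<exists>I. interval_rep V E I)"

definition exactly_hittable :: "real set set \<Rightarrow> bool" where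
  "exactly_hittable F \<longleftrightarrow> (\<exists>S. \<forall>J\<in>F. card (S \<inter> J) = 1)"

definition exactly_hittable_interval_graph :: "'a set \<Rightarrow> ('a \<Rightarrow> 'a \<Rightarrow> bool) \<Rightarrow> bool" where
  "exactly_hittable_interval_graph V E \<longleftrightarrow>
     (\<exists>I. interval_rep V E I \<and> exactly_hittable (I ` V))"

definition induced_path :: "'a set \<Rightarrow> ('a \<Rightarrow> 'a \<Rightarrow> bool) \<Rightarrow> 'a list \<Rightarrow> bool" where
  "induced_path V E P \<longleftrightarrow> P \<noteq> [] \<and> distinct P \<and> set P \<subseteq> V
     \<and> (\<forall>i<length P. \<forall>j<length P. E (P ! i) (P ! j) \<longleftrightarrow> (i + 1 = j \<or> j + 1 = i))"

definition open_nbhd :: "'a set \<Rightarrow> ('a \<Rightarrow> 'a \<Rightarrow> bool) \<Rightarrow> 'a set \<Rightarrow> 'a set" where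
  "open_nbhd V E A = {v \<in> V. v \<notin> A \<and> (\<exists>u\<in>A. E u v)}"

definition independent :: "('a \<Rightarrow> 'a \<Rightarrow> bool) \<Rightarrow> 'a set \<Rightarrow> bool" where
  "independent E S \<longleftrightarrow> (\<forall>u\<in>S. \<forall>v\<in>S. \<not> E u v)"

end

theory Submission
  imports Defs "HOL-Library.Disjoint_Sets"
begin

text \<open>Let \<open>L\<close> and \<open>R\<close> be the leftmost and rightmost endpoints of the intervals of the path \<open>P\<close>.
  Since consecutive path intervals overlap, their union is exactly \<open>[L, R]\<close>. Every vertex of the
  independent set \<open>S\<close> meets \<open>[L, R]\<close>, and the intervals of \<open>S\<close> are pairwise disjoint, so at most
  one of them contains \<open>L\<close> and at most one contains \<open>R\<close>. Each remaining one lies inside \<open>[L, R]\<close>,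
  hence its hitting point is also the hitting point of some path vertex; being disjoint, these
  intervals have distinct hitting points. So an exact hitting set forces \<open>|S| \<le> k + 2\<close>.\<close>

lemma nat_change_point:
  assumes "j \<le> k" "Q j \<noteq> Q k"
  shows "\<exists>i. j \<le> i \<and> i < k \<and> Q i \<noteq> Q (Suc i)"
  using assms
proof (induction k)
  case 0
  then show ?case by simp
next
  case (Suc k)
  show ?case
  proof (cases "j \<le> k \<and> Q j \<noteq> Q k")
    case True
    with Suc.IH show ?thesis
      using less_SucI by blast
  next
    case False
    with Suc.prems have "j \<le> k" "Q k \<noteq> Q (Suc k)"
      by (auto simp: le_Suc_eq)
    then show ?thesis
      by blast
  qed
qed

lemma interval_chain_cover:
  fixes a b :: "nat \<Rightarrow> real"
  assumes overlap: "\<And>i. Suc i < n \<Longrightarrow> {a i..b i} \<inter> {a (Suc i)..b (Suc i)} \<noteq> {}"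
    and "j < n" "k < n" "a j \<le> x" "x \<le> b k"
  shows "\<exists>i<n. a i \<le> x \<and> x \<le> b i"
proof (rule ccontr)
  assume uncovered: "\<not> ?thesis"
  define left where "left i \<longleftrightarrow> b i < x" for i
  have right: "x < a i" if "i < n" "\<not> left i" for i
    using uncovered that unfolding left_def by (meson not_le)
  have "left j"
    using right[OF \<open>j < n\<close>] \<open>a j \<le> x\<close> by (metis not_le)
  moreover have "\<not> left k"
    using \<open>x \<le> b k\<close> by (simp add: left_def)
  ultimately have "left (min j k) \<noteq> left (max j k)"
    by (cases "j \<le> k") (auto simp: min_def max_def)
  moreover have "min j k \<le> max j k"
    by (simp add: le_max_iff_disj)
  ultimately obtain i where change: "i < max j k" "left i \<noteq> left (Suc i)"
    using nat_change_point[of "min j k" "max j k" left] by blast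
  then have "i < n" "Suc i < n"
    using assms(2,3) by auto
  then obtain y where y: "a i \<le> y" "y \<le> b i" "a (Suc i) \<le> y" "y \<le> b (Suc i)"
    using overlap by fastforce
  show False
  proof (cases "left i")
    case True
    with change right[OF \<open>Suc i < n\<close>] have "x < a (Suc i)"
      by simp
    with True y show False
      unfolding left_def by simp
  next
    case False
    with change right[OF \<open>i < n\<close>] have "x < a i" "left (Suc i)"
      by simp_all
    with y show False
      unfolding left_def by simp
  qed
qed

lemma induced_path_intervals_cover:
  assumes rep: "interval_rep V E I" and path: "induced_path V E P"
    and ends: "\<And>v. v \<in> V \<Longrightarrow> I v = {A v..B v}"
    and "p \<in> set P" "q \<in> set P" "A p \<le> x" "x \<le> B q"
  shows "\<exists>r\<in>set P. x \<in> I r"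
proof -
  have P: "distinct P" "set P \<subseteq> V"
    "\<And>i j. i < length P \<Longrightarrow> j < length P \<Longrightarrow> E (P ! i) (P ! j) \<longleftrightarrow> (i + 1 = j \<or> j + 1 = i)"
    using path unfolding induced_path_def by auto
  have overlap: "{A (P ! i)..B (P ! i)} \<inter> {A (P ! Suc i)..B (P ! Suc i)} \<noteq> {}"
    if "Suc i < length P" for i
  proof -
    have "P ! i \<in> V" "P ! Suc i \<in> V"
      using that by (auto intro!: subsetD[OF P(2)])
    moreover have "P ! i \<noteq> P ! Suc i"
      using P(1) that by (simp add: nth_eq_iff_index_eq)
    moreover have "E (P ! i) (P ! Suc i)"
      using P(3) that by simp
    ultimately have "I (P ! i) \<inter> I (P ! Suc i) \<noteq> {}"
      using rep unfolding interval_rep_def by blast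
    then show ?thesis
      using ends \<open>P ! i \<in> V\<close> \<open>P ! Suc i \<in> V\<close> by simp
  qed
  obtain j k where "j < length P" "k < length P" "P ! j = p" "P ! k = q"
    using assms(4,5) by (meson in_set_conv_nth)
  then have "\<exists>i<length P. A (P ! i) \<le> x \<and> x \<le> B (P ! i)"
    using interval_chain_cover[of "length P" "\<lambda>i. A (P ! i)" "\<lambda>i. B (P ! i)", OF overlap]
      assms(6,7) by blast
  then obtain i where "i < length P" "x \<in> {A (P ! i)..B (P ! i)}"
    by auto
  moreover have "P ! i \<in> V"
    using \<open>i < length P\<close> by (auto intro!: subsetD[OF P(2)])
  ultimately have "x \<in> I (P ! i)"
    using ends by simp
  then show ?thesis
    using \<open>i < length P\<close> by (meson nth_mem)
qed

lemma card_le_1_if_disjoint_family_common_point: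
  assumes "disjoint_family_on J T" "\<And>t. t \<in> T \<Longrightarrow> c \<in> J t"
  shows "card T \<le> 1"
proof (cases "T = {}")
  case False
  then obtain t where "t \<in> T" by blast
  with assms have "T \<subseteq> {t}"
    unfolding disjoint_family_on_def by blast
  then show ?thesis
    using card_mono[of "{t}" T] by simp
qed simp

text \<open>Each member of \<open>T\<close> has its own hitting point, which is also that of a member of \<open>Q\<close>.\<close>
lemma exact_hitting_disjoint_family_card_le:
  assumes hit: "\<And>v. v \<in> V \<Longrightarrow> card (H \<inter> I v) = 1"
    and "T \<subseteq> V" "Q \<subseteq> V" "finite Q"
    and disj: "disjoint_family_on I T"
    and inside: "\<Union> (I ` T) \<subseteq> \<Union> (I ` Q)"
  shows "card T \<le> card Q"
proof -
  have "\<forall>v\<in>V. \<exists>y. H \<inter> I v = {y}"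
    using hit by (simp add: card_1_singleton_iff)
  then obtain h where h: "\<And>v. v \<in> V \<Longrightarrow> H \<inter> I v = {h v}"
    by metis
  have "inj_on h T"
  proof (rule inj_onI)
    fix s t assume "s \<in> T" "t \<in> T" "h s = h t"
    then have "h s \<in> I s \<inter> I t"
      using h \<open>T \<subseteq> V\<close> by (metis Int_iff insertI1 subsetD)
    with disj \<open>s \<in> T\<close> \<open>t \<in> T\<close> show "s = t"
      unfolding disjoint_family_on_def by blast
  qed
  moreover have "h ` T \<subseteq> h ` Q"
  proof
    fix y assume "y \<in> h ` T"
    then obtain t where "t \<in> T" "y = h t" by blast
    then have "y \<in> H" "y \<in> I t"
      using h \<open>T \<subseteq> V\<close> by blast+
    then obtain q where "q \<in> Q" "y \<in> H \<inter> I q"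
      using inside \<open>t \<in> T\<close> by blast
    then show "y \<in> h ` Q"
      using h \<open>Q \<subseteq> V\<close> by blast
  qed
  ultimately have "card T \<le> card (h ` Q)"
    using \<open>finite Q\<close> by (metis card_image card_mono finite_imageI)
  also have "\<dots> \<le> card Q"
    using \<open>finite Q\<close> by (rule card_image_le)
  finally show ?thesis .
qed

lemma interval_rep_disjoint_family_on_independent:
  assumes "interval_rep V E I" "S \<subseteq> V" "independent E S"
  shows "disjoint_family_on I S"
  using assms unfolding interval_rep_def independent_def disjoint_family_on_def by blast

lemma open_nbhd_meets_interval_span:
  assumes rep: "interval_rep V E I" and ends: "\<And>v. v \<in> V \<Longrightarrow> I v = {A v..B v}"
    and "set P \<subseteq> V" and s: "s \<in> open_nbhd V E (set P)"
  shows "Min (A ` set P) \<le> B s \<and> A s \<le> Max (B ` set P)"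
proof -
  obtain p where p: "p \<in> set P" "E p s" "p \<noteq> s" "s \<in> V"
    using s unfolding open_nbhd_def by blast
  with \<open>set P \<subseteq> V\<close> have "I p \<inter> I s \<noteq> {}"
    using rep unfolding interval_rep_def by blast
  moreover have "I p = {A p..B p}" "I s = {A s..B s}"
    using ends p(1,4) \<open>set P \<subseteq> V\<close> by auto
  ultimately have "A p \<le> B s" "A s \<le> B p"
    by auto
  moreover have "Min (A ` set P) \<le> A p" "B p \<le> Max (B ` set P)"
    using p(1) by simp_all
  ultimately show ?thesis
    by auto
qed

lemma independent_nbhd_of_induced_path_card_le:
  assumes rep: "interval_rep V E I"
    and hit: "\<And>v. v \<in> V \<Longrightarrow> card (H \<inter> I v) = 1"
    and path: "induced_path V E P"
    and nbhd: "S \<subseteq> open_nbhd V E (set P)"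
    and indep: "independent E S"
  shows "card S \<le> length P + 2"
proof -
  obtain A B where AB: "\<And>v. v \<in> V \<Longrightarrow> I v = {A v..B v}"
    using rep unfolding interval_rep_def by metis
  have P: "set P \<noteq> {}" "set P \<subseteq> V"
    using path unfolding induced_path_def by auto
  have S: "S \<subseteq> V"
    using nbhd unfolding open_nbhd_def by auto
  define L where "L = Min (A ` set P)"
  define R where "R = Max (B ` set P)"
  have "L \<in> A ` set P" "R \<in> B ` set P"
    unfolding L_def R_def using P(1) by simp_all
  then obtain pL pR where "pL \<in> set P" "A pL = L" "pR \<in> set P" "B pR = R"
    by blast
  then have span: "{L..R} \<subseteq> \<Union> (I ` set P)"
    using induced_path_intervals_cover[OF rep path AB] by auto
  have meets_span: "L \<le> B s \<and> A s \<le> R" if "s \<in> S" for s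
    using open_nbhd_meets_interval_span[OF rep AB P(2)] nbhd that unfolding L_def R_def by blast
  have disj: "disjoint_family_on I S"
    using rep S indep by (rule interval_rep_disjoint_family_on_independent)
  define S_left where "S_left = {s \<in> S. A s < L}"
  define S_right where "S_right = {s \<in> S. R < B s}"
  define S_inner where "S_inner = {s \<in> S. L \<le> A s \<and> B s \<le> R}"
  have "card S_left \<le> 1"
  proof (rule card_le_1_if_disjoint_family_common_point)
    show "disjoint_family_on I S_left"
      using disj by (rule disjoint_family_on_mono[rotated]) (auto simp: S_left_def)
    show "L \<in> I s" if "s \<in> S_left" for s
      using that meets_span[of s] AB[of s] S unfolding S_left_def by auto
  qed
  moreover have "card S_right \<le> 1"
  proof (rule card_le_1_if_disjoint_family_common_point)
    show "disjoint_family_on I S_right"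
      using disj by (rule disjoint_family_on_mono[rotated]) (auto simp: S_right_def)
    show "R \<in> I s" if "s \<in> S_right" for s
      using that meets_span[of s] AB[of s] S unfolding S_right_def by auto
  qed
  moreover have "card S_inner \<le> card (set P)"
  proof (rule exact_hitting_disjoint_family_card_le[OF hit _ P(2)])
    show "S_inner \<subseteq> V"
      using S unfolding S_inner_def by auto
    show "disjoint_family_on I S_inner"
      using disj by (rule disjoint_family_on_mono[rotated]) (auto simp: S_inner_def)
    have "I s \<subseteq> {L..R}" if "s \<in> S_inner" for s
      using that AB[of s] S unfolding S_inner_def by auto
    with span show "\<Union> (I ` S_inner) \<subseteq> \<Union> (I ` set P)"
      by blast
  qed simp_all
  moreover have "S = S_left \<union> S_right \<union> S_inner"
    unfolding S_left_def S_right_def S_inner_def by auto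
  then have "card S \<le> card S_left + card S_right + card S_inner"
    by (metis card_Un_le add_right_mono order.trans)
  ultimately show ?thesis
    using card_length[of P] by linarith
qed

theorem lemma13:
  fixes V :: "'a set" and E :: "'a \<Rightarrow> 'a \<Rightarrow> bool" and P :: "'a list" and S :: "'a set"
  assumes "simple_graph V E"
    and "interval_graph V E"
    and "induced_path V E P"
    and "S \<subseteq> open_nbhd V E (set P)"
    and "independent E S"
    and "card S \<ge> length P + 3"
  shows "\<not> exactly_hittable_interval_graph V E"
proof
  assume "exactly_hittable_interval_graph V E"
  then obtain I H where "interval_rep V E I" "\<And>v. v \<in> V \<Longrightarrow> card (H \<inter> I v) = 1"
    unfolding exactly_hittable_interval_graph_def exactly_hittable_def by blast
  then have "card S \<le> length P + 2"
    using independent_nbhd_of_induced_path_card_le assms(3-5) by blast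
  with assms(6) show False
    by linarith
qed

end
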